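(* Let $l_1,u_1,l_2,u_2$ be non-negative integers and $(f(k))$, $(g(k))$ complex sequences such that $\sum_{k=l_1}^{u_1}f(k)(1-t)^k=\sum_{k=l_2}^{u_2}g(k)t^k$ for all complex $t$. Let $s\in\mathbb{C}\setminus\mathbb{Z}^{-}$, $s\ne0$. Then \[ \sum_{k=l_1}^{u_1}\frac{f(k)}{\binom{k+s}{s}}=\sum_{k=l_2}^{u_2}\frac{g(k)s}{k+s},\qquad \sum_{k=l_1}^{u_1}\frac{f(k)}{k+1}=\sum_{k=l_2}^{u_2}\frac{g(k)}{k+1}, \] \[ \sum_{k=l_1}^{u_1}f(k)\frac{H_s-H_k}{\binom{k+s}{s}}=\sum_{k=l_2}^{u_2}g(k)\frac{s+1}{k+s}+\sum_{k=l_2}^{u_2}g(k)s\frac{H_{k+s-1}-1}{k+s}, \] \[ \sum_{k=l_1}^{u_1}f(k)\frac{1-H_k}{k+1}=\sum_{k=l_2}^{u_2}g(k)\frac{2}{k+1}+\sum_{k=l_2}^{u_2}g(k)\frac{H_k-1}{k+1}. \]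
   Context: $\mathbb{Z}^{-}$ denotes the set of negative integers. For complex $z$ not a negative integer, $H_z=\psi(z+1)+\gamma$; for integers $m\ge0$, $H_m=\sum_{j=1}^m1/j$. Binomial coefficients with complex entries: $\binom{x}{y}=\frac{\Gamma(x+1)}{\Gamma(y+1)\Gamma(x-y+1)}$. *)

theory Defs
  imports "HOL-Analysis.Analysis"
begin

definition Hc :: "complex \<Rightarrow> complex" where
  "Hc z = Digamma (z + 1) + euler_mascheroni"

definition cbinom :: "complex \<Rightarrow> complex \<Rightarrow> complex" where
  "cbinom x y = Gamma (x + 1) / (Gamma (y + 1) * Gamma (x - y + 1))"

end

theory Submission
  imports Defs "HOL-Computational_Algebra.Polynomial"
begin

text \<open>The hypothesis says that the polynomials \<open>\<Sum> f k (1 - X)^k\<close> and \<open>\<Sum> g k X^k\<close> coincide,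
  so every linear functional on polynomials takes the same value on both. Pairing coefficients
  with a weight sequence \<open>w\<close> sends the right-hand side to \<open>\<Sum> g k w k\<close> and \<open>(1 - X)^k\<close> to the
  \<open>k\<close>-th alternating difference of \<open>w\<close>. Since \<open>(1 - X)^(k+1) = (1 - X)^k - X (1 - X)^k\<close>,
  these differences satisfy a recurrence involving the shifted sequence \<open>w (j + 1)\<close>; for
  \<open>w j = s / (j + s)\<close> and \<open>w j = (1 + s H(j + s - 1)) / (j + s)\<close> the shifted sequences are
  combinations of the same weights at \<open>s + 1\<close>, and induction on \<open>k\<close> yields
  \<open>1 / binom(k + s, s)\<close> and \<open>(H s - H k) / binom(k + s, s)\<close>. The identities with
  \<open>1 / (k + 1)\<close> are the case \<open>s = 1\<close>.\<close>

definition coeff_pairing :: "(nat \<Rightarrow> 'a::comm_semiring_0) \<Rightarrow> 'a poly \<Rightarrow> 'a" where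
  "coeff_pairing w p = (\<Sum>j\<le>degree p. coeff p j * w j)"

lemma coeff_pairing_eq_sum_atMost:
  "degree p \<le> n \<Longrightarrow> coeff_pairing w p = (\<Sum>j\<le>n. coeff p j * w j)"
  unfolding coeff_pairing_def by (rule sum.mono_neutral_left) (auto simp: coeff_eq_0)

lemma coeff_pairing_add: "coeff_pairing w (p + q) = coeff_pairing w p + coeff_pairing w q"
proof -
  define n where "n = max (degree p) (degree q)"
  have "degree (p + q) \<le> n" "degree p \<le> n" "degree q \<le> n"
    unfolding n_def by (simp_all add: degree_add_le)
  then show ?thesis
    by (simp add: coeff_pairing_eq_sum_atMost distrib_right sum.distrib)
qed

lemma coeff_pairing_smult: "coeff_pairing w (smult c p) = c * coeff_pairing w p"
proof -
  have "coeff_pairing w (smult c p) = (\<Sum>j\<le>degree p. coeff (smult c p) j * w j)"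
    by (rule coeff_pairing_eq_sum_atMost) (rule degree_smult_le)
  then show ?thesis
    by (simp add: coeff_pairing_def sum_distrib_left mult.assoc)
qed

lemma coeff_pairing_diff:
  fixes p q :: "'a::comm_ring poly"
  shows "coeff_pairing w (p - q) = coeff_pairing w p - coeff_pairing w q"
  using coeff_pairing_add[of w "p - q" q] by simp

lemma coeff_pairing_sum: "coeff_pairing w (\<Sum>k\<in>A. p k) = (\<Sum>k\<in>A. coeff_pairing w (p k))"
  by (induction A rule: infinite_finite_induct)
     (simp_all add: coeff_pairing_add, simp_all add: coeff_pairing_def)

lemma coeff_pairing_monom: "coeff_pairing w (monom c k) = c * w k"
proof -
  have "coeff_pairing w (monom c k) = (\<Sum>j\<le>k. coeff (monom c k) j * w j)"
    by (rule coeff_pairing_eq_sum_atMost) (simp add: degree_monom_le)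
  also have "\<dots> = c * w k"
    by (subst sum.remove[of _ k]) (auto simp: coeff_monom)
  finally show ?thesis .
qed

lemma coeff_pairing_1: "coeff_pairing w 1 = w 0"
  by (simp add: coeff_pairing_def)

lemma coeff_pairing_pCons_0: "coeff_pairing w (pCons 0 p) = coeff_pairing (\<lambda>j. w (Suc j)) p"
proof -
  have "coeff_pairing w (pCons 0 p) = (\<Sum>j\<le>Suc (degree p). coeff (pCons 0 p) j * w j)"
    by (rule coeff_pairing_eq_sum_atMost) (simp add: degree_pCons_le)
  also have "\<dots> = (\<Sum>j\<le>degree p. coeff p j * w (Suc j))"
    by (subst sum.atMost_Suc_shift) simp
  finally show ?thesis
    by (simp add: coeff_pairing_def)
qed

lemma coeff_pairing_weight_add:
  "coeff_pairing (\<lambda>j. v j + w j) p = coeff_pairing v p + coeff_pairing w p"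
  by (simp add: coeff_pairing_def distrib_left sum.distrib)

lemma coeff_pairing_weight_scale: "coeff_pairing (\<lambda>j. c * w j) p = c * coeff_pairing w p"
  by (simp add: coeff_pairing_def sum_distrib_left mult_ac)

lemma sum_coeff_pairing_one_minus_X_pow:
  fixes f g :: "nat \<Rightarrow> 'a::{idom,ring_char_0}"
  assumes "\<forall>t. (\<Sum>k=l1..u1. f k * (1 - t) ^ k) = (\<Sum>k=l2..u2. g k * t ^ k)"
  shows "(\<Sum>k=l1..u1. f k * coeff_pairing w ([:1, -1:] ^ k)) = (\<Sum>k=l2..u2. g k * w k)"
proof -
  have "poly (\<Sum>k=l1..u1. smult (f k) ([:1, -1:] ^ k)) = poly (\<Sum>k=l2..u2. monom (g k) k)"
    using assms by (simp add: fun_eq_iff poly_sum poly_monom)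
  then have "(\<Sum>k=l1..u1. smult (f k) ([:1, -1:] ^ k)) = (\<Sum>k=l2..u2. monom (g k) k)"
    by (simp add: poly_eq_poly_eq_iff)
  then show ?thesis
    by (metis (no_types, lifting) coeff_pairing_sum coeff_pairing_smult coeff_pairing_monom sum.cong)
qed

lemma coeff_pairing_one_minus_X_pow_Suc:
  fixes w :: "nat \<Rightarrow> 'a::comm_ring_1"
  shows "coeff_pairing w ([:1, -1:] ^ Suc k)
    = coeff_pairing w ([:1, -1:] ^ k) - coeff_pairing (\<lambda>j. w (Suc j)) ([:1, -1:] ^ k)"
proof -
  have "[:1, -1:] ^ Suc k = [:1, -1:] ^ k - pCons 0 ([:1, -1:] ^ k :: 'a poly)"
    by (simp add: algebra_simps)
  then show ?thesis
    by (simp only: coeff_pairing_diff coeff_pairing_pCons_0)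
qed

lemma of_nat_add_neq_0_if_notin_nonpos_Ints:
  "s \<notin> \<int>\<^sub>\<le>\<^sub>0 \<Longrightarrow> of_nat n + s \<noteq> 0"
  by (metis add.commute plus_of_nat_eq_0_imp)

lemma pochhammer_Suc_shift: "a * pochhammer (a + 1) n = (a + of_nat n) * pochhammer a n"
  by (metis pochhammer_rec pochhammer_rec')

definition recip_weight :: "'a::field \<Rightarrow> nat \<Rightarrow> 'a" where
  "recip_weight s j = s / (of_nat j + s)"

lemma recip_weight_Suc:
  fixes s :: "'a::field_char_0"
  assumes "s \<notin> \<int>\<^sub>\<le>\<^sub>0"
  shows "recip_weight s (Suc j) = s / (s + 1) * recip_weight (s + 1) j"
proof -
  have "s + 1 \<noteq> 0" "of_nat j + (s + 1) \<noteq> 0"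
    using of_nat_add_neq_0_if_notin_nonpos_Ints[OF assms, of 1]
      of_nat_add_neq_0_if_notin_nonpos_Ints[OF assms, of "Suc j"] by (simp_all add: add_ac)
  then show ?thesis by (simp add: recip_weight_def add_ac)
qed

lemma coeff_pairing_recip_weight:
  fixes s :: "'a::field_char_0"
  assumes "s \<notin> \<int>\<^sub>\<le>\<^sub>0"
  shows "coeff_pairing (recip_weight s) ([:1, -1:] ^ k) = fact k / pochhammer (s + 1) k"
  using assms
proof (induction k arbitrary: s)
  case 0
  then show ?case
    using of_nat_add_neq_0_if_notin_nonpos_Ints[of s 0] by (simp add: coeff_pairing_1 recip_weight_def)
next
  case (Suc k)
  have s1: "s + 1 \<notin> \<int>\<^sub>\<le>\<^sub>0" using Suc.prems plus_one_in_nonpos_Ints_imp by blast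
  have nz: "s + 1 \<noteq> 0" "s + 1 + of_nat k \<noteq> 0" "pochhammer (s + 1) k \<noteq> 0"
    using of_nat_add_neq_0_if_notin_nonpos_Ints[OF s1, of 0]
      of_nat_add_neq_0_if_notin_nonpos_Ints[OF s1, of k] s1
    by (auto simp: add_ac dest: pochhammer_eq_0_imp_nonpos_Int)
  have "coeff_pairing (recip_weight s) ([:1, -1:] ^ Suc k)
      = fact k / pochhammer (s + 1) k - s / (s + 1) * (fact k / pochhammer (s + 1 + 1) k)"
    unfolding coeff_pairing_one_minus_X_pow_Suc recip_weight_Suc[OF Suc.prems]
      coeff_pairing_weight_scale Suc.IH[OF Suc.prems] Suc.IH[OF s1] ..
  also have "\<dots> = fact k / pochhammer (s + 1) k
      - s * fact k / ((s + 1 + of_nat k) * pochhammer (s + 1) k)"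
    using pochhammer_Suc_shift[of "s + 1" k] nz(1) by (simp add: field_simps)
  also have "\<dots> = (of_nat k + 1) * fact k / ((s + 1 + of_nat k) * pochhammer (s + 1) k)"
    using nz by (simp add: divide_simps) (simp add: algebra_simps)
  also have "\<dots> = fact (Suc k) / pochhammer (s + 1) (Suc k)"
    by (simp add: pochhammer_rec' add_ac)
  finally show ?case .
qed

lemma Hc_plus1: "z + 1 \<noteq> 0 \<Longrightarrow> Hc (z + 1) = Hc z + 1 / (z + 1)"
  unfolding Hc_def using Digamma_plus1[of "z + 1"] by simp

lemma Hc_of_nat: "Hc (of_nat n) = harm n"
  unfolding Hc_def using Digamma_of_nat[of n, where 'a=complex] by (simp add: add.commute)

definition harm_weight :: "complex \<Rightarrow> nat \<Rightarrow> complex" where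
  "harm_weight s j = (1 + s * Hc (of_nat j + s - 1)) / (of_nat j + s)"

lemma harm_weight_Suc:
  assumes "s \<notin> \<int>\<^sub>\<le>\<^sub>0"
  shows "harm_weight s (Suc j)
    = s / (s + 1) * harm_weight (s + 1) j + 1 / (s + 1)^2 * recip_weight (s + 1) j"
proof -
  have key: "(1 + (a - 1) * H) / d = (a - 1) / a * ((1 + a * H) / d) + 1 / a^2 * (a / d)"
    if "a \<noteq> 0" "d \<noteq> 0" for a d H :: complex
    using that by (simp add: field_simps power2_eq_square)
  have "s + 1 \<noteq> 0" "of_nat j + (s + 1) \<noteq> 0"
    using of_nat_add_neq_0_if_notin_nonpos_Ints[OF assms, of 1]
      of_nat_add_neq_0_if_notin_nonpos_Ints[OF assms, of "Suc j"] by (simp_all add: add_ac)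
  note key[OF this, of "Hc (of_nat j + s)"]
  moreover have "of_nat (Suc j) + s = of_nat j + (s + 1)" by simp
  ultimately show ?thesis
    unfolding harm_weight_def recip_weight_def by (simp add: add_ac)
qed

lemma coeff_pairing_harm_weight:
  assumes "s \<notin> \<int>\<^sub>\<le>\<^sub>0"
  shows "coeff_pairing (harm_weight s) ([:1, -1:] ^ k)
    = (Hc s - harm k) * fact k / pochhammer (s + 1) k"
  using assms
proof (induction k arbitrary: s)
  case 0
  then have "s \<noteq> 0" by auto
  then have "harm_weight s 0 = Hc s"
    using Hc_plus1[of "s - 1"] by (simp add: harm_weight_def field_simps)
  then show ?case by (simp add: coeff_pairing_1 harm_expand(1))
next
  case (Suc k)
  define a where "a = s + 1"
  define d where "d = s + 1 + of_nat k"
  define P where "P = pochhammer (s + 1) k"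
  define A where "A = Hc s - harm k"
  have s1: "a \<notin> \<int>\<^sub>\<le>\<^sub>0" using Suc.prems plus_one_in_nonpos_Ints_imp a_def by blast
  have nz: "a \<noteq> 0" "d \<noteq> 0" "P \<noteq> 0"
    using of_nat_add_neq_0_if_notin_nonpos_Ints[OF s1, of 0]
      of_nat_add_neq_0_if_notin_nonpos_Ints[OF s1, of k] s1
    by (auto simp: a_def d_def P_def add_ac dest: pochhammer_eq_0_imp_nonpos_Int)
  have Q: "pochhammer (a + 1) k = d * P / a"
    using pochhammer_Suc_shift[of a k] nz(1) by (simp add: a_def d_def P_def field_simps)
  have num: "A * (d - a + 1) - 1 = (A - 1 / (of_nat k + 1)) * (of_nat k + 1)"
    using of_nat_neq_0[of k, where 'a=complex] by (simp add: a_def d_def field_simps)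
  have "coeff_pairing (harm_weight s) ([:1, -1:] ^ Suc k)
      = coeff_pairing (harm_weight s) ([:1, -1:] ^ k)
        - (s / a * coeff_pairing (harm_weight a) ([:1, -1:] ^ k)
           + 1 / a^2 * coeff_pairing (recip_weight a) ([:1, -1:] ^ k))"
    unfolding coeff_pairing_one_minus_X_pow_Suc harm_weight_Suc[OF Suc.prems]
      coeff_pairing_weight_add coeff_pairing_weight_scale a_def ..
  also have "\<dots> = A * fact k / P - (a - 1) / a * ((A + 1 / a) * fact k / (d * P / a))
      - 1 / a^2 * (fact k / (d * P / a))"
    using Hc_plus1[of s] nz(1)
    by (simp add: Suc.IH[OF Suc.prems] Suc.IH[OF s1] coeff_pairing_recip_weight[OF s1] Q)
       (simp add: a_def A_def P_def algebra_simps)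
  also have "\<dots> = (A * (d - a + 1) - 1) * fact k / (d * P)"
    using nz by (simp add: field_simps power2_eq_square)
  also have "\<dots> = (A - 1 / (of_nat k + 1)) * (of_nat k + 1) * fact k / (d * P)"
    by (simp only: num)
  also have "\<dots> = (Hc s - harm (Suc k)) * fact (Suc k) / pochhammer (s + 1) (Suc k)"
    by (simp add: A_def d_def P_def harm_Suc pochhammer_rec' inverse_eq_divide add_ac mult_ac)
  finally show ?case .
qed

lemma cbinom_of_nat_add:
  assumes "s + 1 \<notin> \<int>\<^sub>\<le>\<^sub>0"
  shows "cbinom (of_nat k + s) s = pochhammer (s + 1) k / fact k"
proof -
  have "cbinom (of_nat k + s) s = Gamma (s + 1 + of_nat k) / (Gamma (s + 1) * Gamma (1 + of_nat k))"
    unfolding cbinom_def by (simp add: add_ac)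
  then show ?thesis
    using assms by (simp add: pochhammer_Gamma Gamma_fact)
qed

lemma sum_div_cbinom_eq_sum:
  fixes f g :: "nat \<Rightarrow> complex"
  assumes hyp: "\<forall>t. (\<Sum>k=l1..u1. f k * (1 - t) ^ k) = (\<Sum>k=l2..u2. g k * t ^ k)"
    and s: "s \<notin> \<int>\<^sub>\<le>\<^sub>0"
  shows "(\<Sum>k=l1..u1. f k / cbinom (of_nat k + s) s) = (\<Sum>k=l2..u2. g k * s / (of_nat k + s))"
proof -
  have "s + 1 \<notin> \<int>\<^sub>\<le>\<^sub>0" using s plus_one_in_nonpos_Ints_imp by blast
  then show ?thesis
    using sum_coeff_pairing_one_minus_X_pow[OF hyp, of "recip_weight s"] s
    by (simp add: coeff_pairing_recip_weight cbinom_of_nat_add recip_weight_def)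
qed

lemma sum_harm_div_cbinom_eq_sum:
  fixes f g :: "nat \<Rightarrow> complex"
  assumes hyp: "\<forall>t. (\<Sum>k=l1..u1. f k * (1 - t) ^ k) = (\<Sum>k=l2..u2. g k * t ^ k)"
    and s: "s \<notin> \<int>\<^sub>\<le>\<^sub>0"
  shows "(\<Sum>k=l1..u1. f k * (Hc s - harm k) / cbinom (of_nat k + s) s)
    = (\<Sum>k=l2..u2. g k * (s + 1) / (of_nat k + s))
      + (\<Sum>k=l2..u2. g k * s * (Hc (of_nat k + s - 1) - 1) / (of_nat k + s))"
proof -
  have "s + 1 \<notin> \<int>\<^sub>\<le>\<^sub>0" using s plus_one_in_nonpos_Ints_imp by blast
  then have "(\<Sum>k=l1..u1. f k * (Hc s - harm k) / cbinom (of_nat k + s) s)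
      = (\<Sum>k=l2..u2. g k * harm_weight s k)"
    using sum_coeff_pairing_one_minus_X_pow[OF hyp, of "harm_weight s"] s
    by (simp add: coeff_pairing_harm_weight cbinom_of_nat_add mult.assoc)
  also have "\<dots> = (\<Sum>k=l2..u2. g k * (s + 1) / (of_nat k + s)
      + g k * s * (Hc (of_nat k + s - 1) - 1) / (of_nat k + s))"
    by (rule sum.cong) (simp_all add: harm_weight_def add_divide_distrib[symmetric] algebra_simps)
  finally show ?thesis
    by (simp add: sum.distrib)
qed

theorem corollary7:
  fixes l1 u1 l2 u2 :: nat and f g :: "nat \<Rightarrow> complex" and s :: complex
  assumes hyp: "\<forall>t::complex. (\<Sum>k=l1..u1. f k * (1 - t) ^ k) = (\<Sum>k=l2..u2. g k * t ^ k)"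
    and s_notnegint: "\<forall>n::int. n < 0 \<longrightarrow> s \<noteq> of_int n"
    and s_nz: "s \<noteq> 0"
  shows "(\<Sum>k=l1..u1. f k / cbinom (of_nat k + s) s) = (\<Sum>k=l2..u2. g k * s / (of_nat k + s))
    \<and> (\<Sum>k=l1..u1. f k / (of_nat k + 1)) = (\<Sum>k=l2..u2. g k / (of_nat k + 1))
    \<and> (\<Sum>k=l1..u1. f k * (Hc s - harm k) / cbinom (of_nat k + s) s)
        = (\<Sum>k=l2..u2. g k * (s + 1) / (of_nat k + s))
          + (\<Sum>k=l2..u2. g k * s * (Hc (of_nat k + s - 1) - 1) / (of_nat k + s))
    \<and> (\<Sum>k=l1..u1. f k * (1 - harm k) / (of_nat k + 1))
        = (\<Sum>k=l2..u2. g k * 2 / (of_nat k + 1))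
          + (\<Sum>k=l2..u2. g k * (harm k - 1) / (of_nat k + 1))"
proof -
  have s: "s \<notin> \<int>\<^sub>\<le>\<^sub>0"
    using s_notnegint s_nz by (auto elim!: nonpos_Ints_cases simp: le_less)
  have cbinom_1: "cbinom (of_nat k + 1) 1 = of_nat k + 1" for k
  proof -
    have "pochhammer (1 + 1) k = (fact (Suc k) :: complex)"
      by (metis pochhammer_fact pochhammer_rec mult_1)
    then show ?thesis
      using cbinom_of_nat_add[of 1 k] by simp
  qed
  have Hc_1: "Hc 1 = 1"
    using Hc_of_nat[of 1] by (simp add: harm_expand(2))
  show ?thesis
    using sum_div_cbinom_eq_sum[OF hyp s] sum_div_cbinom_eq_sum[OF hyp, of 1]
      sum_harm_div_cbinom_eq_sum[OF hyp s] sum_harm_div_cbinom_eq_sum[OF hyp, of 1]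
    by (simp add: cbinom_1 Hc_1 Hc_of_nat)
qed

end
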